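(* Let $\mathbf{G}=(\mathcal{V},\mathcal{E})$ be a strongly connected directed graph on $\mathcal{V}=\{1,\dots,m\}$ with diameter $\delta(\mathbf{G})$, let $a>0$, and let each node $i$ hold a private input $x_i\in[0,a)$. If the TITAN algorithm (described in the context) is run with parameters $T\ge\delta(\mathbf{G})$ and a positive integer $k\le m$, then it terminates after $T\lceil m/k\rceil$ rounds of the recovery phase and every node outputs exactly $\bar{x}=\frac{1}{m}\sum_{i=1}^m x_i$.
   Context: For $a'>0$ and real $y$, $\mathrm{mod}(y,a')=y-pa'$, where $p$ is the unique integer with $y-pa'\in[0,a')$. $\mathcal{N}_i^{in}$ and $\mathcal{N}_i^{out}$ denote the in- and out-neighbors of node $i$; $\delta(\mathbf{G})$ is the directed diameter. Communication is synchronous and reliable. TITAN algorithm: (1) Obfuscation: each node $i$ draws, for every out-neighbor $j$, an independent random number $r_{ij}$ uniform on $[0,ma)$ and sends it to $j$; node $i$ computes $t_i=\mathrm{mod}\big(\sum_{j\in\mathcal{N}_i^{in}} r_{ji}-\sum_{j\in\mathcal{N}_i^{out}} r_{ij},\, ma\big)$ and the perturbed input $\tilde{x}_i=\mathrm{mod}(x_i+t_i,ma)$. (2) Distributed recovery: the nodes run the Top-$k$ consensus primitive $\lceil m/k\rceil$ times in succession on the pairs $(\tilde{x}_i,i)$, each run using $T$ rounds and excluding the pairs already recovered in previous runs; each node stores the recovered pairs. The Top-$k$ primitive: each node keeps length-$k$ lists $L_i,\ell_i$ of values and identifiers, initialized with its own (not yet recovered) pair and empty entries; in each of $T$ rounds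 every node sends its lists to its out-neighbors and replaces its lists by the (up to) $k$ largest value–identifier pairs among its own and received ones, in decreasing order of value with ties broken in favor of larger identifier. (3) Output: each node $i$, having recovered values $r_i[1],\dots,r_i[m]$, outputs $\frac{1}{m}\mathrm{mod}\big(\sum_{l=1}^m r_i[l],ma\big)$. *)

theory Defs
  imports Complex_Main "HOL-Library.Product_Lexorder"
begin

definition rmod :: "real \<Rightarrow> real \<Rightarrow> real" where
  "rmod y a' = y - a' * of_int \<lfloor>y / a'\<rfloor>"

definition in_nbrs :: "(nat \<times> nat) set \<Rightarrow> nat \<Rightarrow> nat set" where
  "in_nbrs E i = {j. (j, i) \<in> E}"

definition out_nbrs :: "(nat \<times> nat) set \<Rightarrow> nat \<Rightarrow> nat set" where
  "out_nbrs E i = {j. (i, j) \<in> E}"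

definition strongly_connected :: "nat set \<Rightarrow> (nat \<times> nat) set \<Rightarrow> bool" where
  "strongly_connected V E \<longleftrightarrow> (\<forall>i\<in>V. \<forall>j\<in>V. (i, j) \<in> E\<^sup>*)"

definition dist_dir :: "(nat \<times> nat) set \<Rightarrow> nat \<Rightarrow> nat \<Rightarrow> nat" where
  "dist_dir E i j = (LEAST n. (i, j) \<in> E ^^ n)"

definition diameter :: "nat set \<Rightarrow> (nat \<times> nat) set \<Rightarrow> nat" where
  "diameter V E = Max {dist_dir E i j | i j. i \<in> V \<and> j \<in> V}"

text \<open>The (up to) k largest pairs, in the lexicographic order on (value, identifier):
  larger value first, ties broken in favour of the larger identifier.\<close>
definition topk :: "nat \<Rightarrow> (real \<times> nat) set \<Rightarrow> (real \<times> nat) set" where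
  "topk k S = set (take k (rev (sorted_list_of_set S)))"

text \<open>State of the Top-k primitive after t rounds at node i; R j is the set of
  pairs already recovered by node j in previous runs (excluded).\<close>
fun topk_state :: "(nat \<times> nat) set \<Rightarrow> nat \<Rightarrow> (nat \<Rightarrow> real) \<Rightarrow> (nat \<Rightarrow> (real \<times> nat) set)
                    \<Rightarrow> nat \<Rightarrow> nat \<Rightarrow> (real \<times> nat) set" where
  "topk_state E k xt R 0 i = {(xt i, i)} - R i"
| "topk_state E k xt R (Suc t) i =
     topk k ((topk_state E k xt R t i \<union> (\<Union>j\<in>in_nbrs E i. topk_state E k xt R t j)) - R i)"

fun recovered :: "(nat \<times> nat) set \<Rightarrow> nat \<Rightarrow> nat \<Rightarrow> (nat \<Rightarrow> real) \<Rightarrow> nat \<Rightarrow> nat \<Rightarrow> (real \<times> nat) set" where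
  "recovered E k T xt 0 i = {}"
| "recovered E k T xt (Suc n) i =
     recovered E k T xt n i \<union> topk_state E k xt (recovered E k T xt n) T i"

text \<open>Obfuscation phase: r i j is the random number node i sends to out-neighbour j.\<close>
definition perturbed :: "nat \<Rightarrow> real \<Rightarrow> (nat \<times> nat) set \<Rightarrow> (nat \<Rightarrow> nat \<Rightarrow> real)
                         \<Rightarrow> (nat \<Rightarrow> real) \<Rightarrow> nat \<Rightarrow> real" where
  "perturbed m a E r x i =
     rmod (x i + rmod ((\<Sum>j\<in>in_nbrs E i. r j i) - (\<Sum>j\<in>out_nbrs E i. r i j)) (real m * a))
          (real m * a)"

definition titan_output :: "nat \<Rightarrow> real \<Rightarrow> (nat \<times> nat) set \<Rightarrow> nat \<Rightarrow> nat
                            \<Rightarrow> (nat \<Rightarrow> nat \<Rightarrow> real) \<Rightarrow> (nat \<Rightarrow> real) \<Rightarrow> nat \<Rightarrow> real" where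
  "titan_output m a E k T r x i =
     (1 / real m) * rmod (\<Sum>p\<in>recovered E k T (perturbed m a E r x) (nat \<lceil>real m / real k\<rceil>) i. fst p)
                          (real m * a)"

end

theory Submission
  imports Defs
begin

(* Every r_ij enters the obfuscation term of node j with sign + and that of node i with
   sign -, so the perturbed inputs add up to sum_i x_i modulo m a; as 0 <= sum_i x_i < m a,
   reducing the sum of all perturbed inputs modulo m a returns sum_i x_i exactly.
   For the recovery phase, the k largest elements of a union are the k largest elements of the
   union of the k largest elements of the parts.  Hence after T >= diameter rounds every node
   holds the k largest pairs not yet recovered, all nodes recover the same k pairs in each run,
   and after ceil(m/k) runs every node knows all m perturbed inputs. *)

lemma card_greater_nth_sorted_desc:
  fixes xs :: "'a::linorder list"
  assumes sorted: "sorted_wrt (>) xs" and p: "p < length xs"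
  shows "card {y \<in> set xs. xs ! p < y} = p"
proof -
  have "{y \<in> set xs. xs ! p < y} = (!) xs ` {..<p}"
  proof (intro set_eqI iffI)
    fix y assume "y \<in> {y \<in> set xs. xs ! p < y}"
    then obtain q where q: "q < length xs" "y = xs ! q" "xs ! p < xs ! q"
      by (auto simp: in_set_conv_nth)
    have "q < p"
    proof (rule ccontr)
      assume "\<not> q < p"
      then have "xs ! q \<le> xs ! p"
        using sorted_wrt_nth_less[OF sorted, of p q] q by (cases "p = q") auto
      then show False using q by simp
    qed
    then show "y \<in> (!) xs ` {..<p}" using q by auto
  next
    fix y assume "y \<in> (!) xs ` {..<p}"
    then show "y \<in> {y \<in> set xs. xs ! p < y}"
      using p sorted_wrt_nth_less[OF sorted] by auto
  qed
  moreover have "distinct xs"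
    using sorted by (metis distinct_rev sorted_wrt_rev strict_sorted_iff)
  then have "inj_on ((!) xs) {..<p}"
    using p by (intro inj_on_nth) auto
  ultimately show ?thesis by (simp add: card_image)
qed

lemma topk_iff:
  assumes "finite S"
  shows "x \<in> topk k S \<longleftrightarrow> x \<in> S \<and> card {y \<in> S. x < y} < k"
proof -
  define xs where "xs = rev (sorted_list_of_set S)"
  have sorted: "sorted_wrt (>) xs" and set_xs: "set xs = S"
    unfolding xs_def using assms strict_sorted_list_of_set[of S] by (auto simp: sorted_wrt_rev)
  have "x \<in> set (take k xs) \<longleftrightarrow> (\<exists>p < length xs. x = xs ! p \<and> p < k)"
    by (force simp: in_set_conv_nth)
  also have "\<dots> \<longleftrightarrow> x \<in> S \<and> card {y \<in> S. x < y} < k"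
  proof
    assume "\<exists>p < length xs. x = xs ! p \<and> p < k"
    then show "x \<in> S \<and> card {y \<in> S. x < y} < k"
      using card_greater_nth_sorted_desc[OF sorted] set_xs by auto
  next
    assume x: "x \<in> S \<and> card {y \<in> S. x < y} < k"
    then obtain p where "p < length xs" "x = xs ! p"
      using set_xs by (auto simp: in_set_conv_nth)
    then show "\<exists>p < length xs. x = xs ! p \<and> p < k"
      using x card_greater_nth_sorted_desc[OF sorted] set_xs by auto
  qed
  finally show ?thesis unfolding topk_def xs_def .
qed

lemma card_topk: "finite S \<Longrightarrow> card (topk k S) = min k (card S)"
  unfolding topk_def by (subst distinct_card) auto

lemma topk_subset: "finite S \<Longrightarrow> topk k S \<subseteq> S"
  using topk_iff by blast

lemma finite_topk [simp]: "finite (topk k S)"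
  unfolding topk_def by simp

lemma topk_eq_self: "finite S \<Longrightarrow> card S \<le> k \<Longrightarrow> topk k S = S"
  by (metis card_seteq card_topk min.absorb2 order_refl topk_subset)

lemma topk_inter_subset:
  assumes "finite B" and "A \<subseteq> B"
  shows "topk k B \<inter> A \<subseteq> topk k A"
proof
  fix x assume x: "x \<in> topk k B \<inter> A"
  have "card {y \<in> A. x < y} \<le> card {y \<in> B. x < y}"
    using assms by (intro card_mono) auto
  then show "x \<in> topk k A"
    using x assms topk_iff[of B] topk_iff[of A] finite_subset[OF assms(2,1)] by auto
qed

lemma topk_eq_if_between:
  assumes "finite B" and "topk k B \<subseteq> U" and "U \<subseteq> B"
  shows "topk k U = topk k B"
proof -
  have "finite U" using assms finite_subset by blast
  have "topk k B \<subseteq> topk k U"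
    using topk_inter_subset[OF assms(1,3)] assms(2) by blast
  moreover have "card (topk k U) \<le> card (topk k B)"
    using card_mono[OF assms(1,3)] card_topk \<open>finite U\<close> assms(1) by simp
  ultimately show ?thesis by (intro card_seteq[symmetric]) auto
qed

lemma topk_UN_topk:
  assumes "finite J" and "\<And>j. j \<in> J \<Longrightarrow> finite (A j)"
  shows "topk k (\<Union>j\<in>J. topk k (A j)) = topk k (\<Union>j\<in>J. A j)"
proof (rule topk_eq_if_between)
  show "finite (\<Union>j\<in>J. A j)" using assms by blast
  show "(\<Union>j\<in>J. topk k (A j)) \<subseteq> (\<Union>j\<in>J. A j)" using assms topk_subset by blast
  show "topk k (\<Union>j\<in>J. A j) \<subseteq> (\<Union>j\<in>J. topk k (A j))"
  proof
    fix x assume x: "x \<in> topk k (\<Union>j\<in>J. A j)"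
    then obtain j where "j \<in> J" "x \<in> A j"
      using topk_subset \<open>finite (\<Union>j\<in>J. A j)\<close> by blast
    then have "x \<in> topk k (A j)"
      using x topk_inter_subset[OF \<open>finite (\<Union>j\<in>J. A j)\<close>, of "A j"] by blast
    then show "x \<in> (\<Union>j\<in>J. topk k (A j))" using \<open>j \<in> J\<close> by blast
  qed
qed

definition reach_within :: "(nat \<times> nat) set \<Rightarrow> nat \<Rightarrow> nat \<Rightarrow> nat set" where
  "reach_within E t i = {j. \<exists>n \<le> t. (j, i) \<in> E ^^ n}"

lemma reach_within_0: "reach_within E 0 i = {i}"
  unfolding reach_within_def by auto

lemma reach_within_Suc:
  "reach_within E (Suc t) i = reach_within E t i \<union> (\<Union>l\<in>in_nbrs E i. reach_within E t l)"
proof -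
  have "(\<exists>n \<le> Suc t. (j, i) \<in> E ^^ n) \<longleftrightarrow>
        (\<exists>n \<le> t. (j, i) \<in> E ^^ n) \<or> (\<exists>l. (l, i) \<in> E \<and> (\<exists>n \<le> t. (j, l) \<in> E ^^ n))"
    (is "?L \<longleftrightarrow> ?R") for j
  proof
    assume ?L
    then obtain n where n: "n \<le> Suc t" "(j, i) \<in> E ^^ n" by blast
    show ?R
    proof (cases n)
      case 0 then show ?thesis using n by auto
    next
      case (Suc n')
      then show ?thesis using n by (auto elim: relpow_Suc_E)
    qed
  next
    assume ?R
    then show ?L
    proof
      assume "\<exists>n \<le> t. (j, i) \<in> E ^^ n"
      then show ?L using le_SucI by blast
    next
      assume "\<exists>l. (l, i) \<in> E \<and> (\<exists>n \<le> t. (j, l) \<in> E ^^ n)"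
      then obtain l n where "(l, i) \<in> E" "n \<le> t" "(j, l) \<in> E ^^ n" by blast
      then have "Suc n \<le> Suc t" "(j, i) \<in> E ^^ Suc n" by auto
      then show ?L by blast
    qed
  qed
  then show ?thesis unfolding reach_within_def in_nbrs_def by (simp add: set_eq_iff)
qed

lemma reach_within_subset:
  assumes "E \<subseteq> V \<times> V" and "i \<in> V"
  shows "reach_within E t i \<subseteq> V"
proof
  fix j assume "j \<in> reach_within E t i"
  then obtain n where "(j, i) \<in> E ^^ n" unfolding reach_within_def by blast
  then show "j \<in> V"
  proof (cases n)
    case (Suc n')
    then obtain l where "(j, l) \<in> E" using \<open>(j, i) \<in> E ^^ n\<close> relpow_Suc_D2 by metis
    then show ?thesis using assms(1) by blast
  qed (use assms(2) in simp)
qed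

lemma reach_within_eq_if_diameter_le:
  assumes "E \<subseteq> V \<times> V" and "strongly_connected V E" and "finite V" and "diameter V E \<le> T"
    and "i \<in> V"
  shows "reach_within E T i = V"
proof
  show "reach_within E T i \<subseteq> V" using reach_within_subset[OF assms(1,5)] .
  show "V \<subseteq> reach_within E T i"
  proof
    fix j assume "j \<in> V"
    then have "(j, i) \<in> E\<^sup>*" using assms(2,5) unfolding strongly_connected_def by blast
    then obtain n where "(j, i) \<in> E ^^ n" using rtrancl_power by blast
    then have path: "(j, i) \<in> E ^^ dist_dir E j i" unfolding dist_dir_def by (rule LeastI)
    have "{dist_dir E i j | i j. i \<in> V \<and> j \<in> V} = (\<lambda>(i, j). dist_dir E i j) ` (V \<times> V)"
      by auto
    then have "dist_dir E j i \<le> diameter V E"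
      unfolding diameter_def using assms(3,5) \<open>j \<in> V\<close> by (intro Max_ge) auto
    then show "j \<in> reach_within E T i"
      using path assms(4) unfolding reach_within_def by (blast intro: le_trans)
  qed
qed

lemma in_nbrs_subset: "E \<subseteq> V \<times> V \<Longrightarrow> in_nbrs E i \<subseteq> V"
  unfolding in_nbrs_def by auto

lemma topk_state_eq_topk_reach_within:
  assumes E: "E \<subseteq> V \<times> V" and "finite V" and "0 < k"
    and R: "\<forall>j\<in>V. R j = R0" and "i \<in> V"
  shows "topk_state E k xt R t i = topk k ((\<lambda>j. (xt j, j)) ` reach_within E t i - R0)"
  using \<open>i \<in> V\<close>
proof (induction t arbitrary: i)
  case 0
  have "card ({(xt i, i)} - R0) \<le> k"
    using \<open>0 < k\<close> card_mono[of "{(xt i, i)}" "{(xt i, i)} - R0"] by simp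
  then show ?case
    using R 0 by (simp add: reach_within_0 topk_eq_self)
next
  case (Suc t)
  define A where "A j = (\<lambda>j. (xt j, j)) ` reach_within E t j - R0" for j
  define J where "J = insert i (in_nbrs E i)"
  have J: "J \<subseteq> V" "finite J"
    unfolding J_def using Suc.prems in_nbrs_subset[OF E] finite_subset[OF _ \<open>finite V\<close>] by auto
  have finite_A: "finite (A j)" if "j \<in> J" for j
    unfolding A_def using that J finite_subset[OF reach_within_subset[OF E] \<open>finite V\<close>] by auto
  have "topk_state E k xt R (Suc t) i = topk k ((\<Union>j\<in>J. topk_state E k xt R t j) - R0)"
    using R Suc.prems unfolding J_def by simp
  also have "(\<Union>j\<in>J. topk_state E k xt R t j) = (\<Union>j\<in>J. topk k (A j))"
    using Suc.IH J unfolding A_def by (intro SUP_cong) auto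
  also have "(\<Union>j\<in>J. topk k (A j)) - R0 = (\<Union>j\<in>J. topk k (A j))"
    using topk_subset[OF finite_A] unfolding A_def by auto
  also have "topk k \<dots> = topk k (\<Union>j\<in>J. A j)"
    using topk_UN_topk J finite_A by blast
  also have "(\<Union>j\<in>J. A j) = (\<lambda>j. (xt j, j)) ` reach_within E (Suc t) i - R0"
    unfolding A_def J_def reach_within_Suc by auto
  finally show ?case .
qed

fun central_recovered :: "nat \<Rightarrow> (real \<times> nat) set \<Rightarrow> nat \<Rightarrow> (real \<times> nat) set" where
  "central_recovered k P 0 = {}"
| "central_recovered k P (Suc n) = central_recovered k P n \<union> topk k (P - central_recovered k P n)"

lemma central_recovered_subset_card:
  assumes "finite P"
  shows "central_recovered k P n \<subseteq> P \<and> card (central_recovered k P n) = min (n * k) (card P)"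
proof (induction n)
  case (Suc n)
  let ?Q = "central_recovered k P n"
  have new: "topk k (P - ?Q) \<subseteq> P - ?Q"
    using topk_subset assms by blast
  have "finite ?Q" using Suc.IH assms finite_subset by blast
  have "card (central_recovered k P (Suc n)) = card ?Q + card (topk k (P - ?Q))"
    unfolding central_recovered.simps
    by (rule card_Un_disjoint[OF \<open>finite ?Q\<close> finite_topk]) (use new in blast)
  also have "card (topk k (P - ?Q)) = min k (card P - card ?Q)"
    using assms Suc.IH by (simp add: card_topk card_Diff_subset \<open>finite ?Q\<close>)
  also have "card ?Q + min k (card P - card ?Q) = min (Suc n * k) (card P)"
    using Suc.IH by (simp add: min_def; linarith)
  finally show ?case
    using Suc.IH new by auto
qed simp

lemma central_recovered_eq_self:
  assumes "finite P" and "card P \<le> n * k"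
  shows "central_recovered k P n = P"
proof (rule card_subset_eq[OF assms(1)])
  show "central_recovered k P n \<subseteq> P" "card (central_recovered k P n) = card P"
    using central_recovered_subset_card[OF assms(1), of k n] assms(2) by auto
qed

lemma recovered_eq_central_recovered:
  assumes "E \<subseteq> V \<times> V" and "finite V" and "0 < k"
    and reach: "\<forall>i\<in>V. reach_within E T i = V"
  shows "\<forall>i\<in>V. recovered E k T xt n i = central_recovered k ((\<lambda>j. (xt j, j)) ` V) n"
proof (induction n)
  case (Suc n)
  show ?case
  proof
    fix i assume "i \<in> V"
    then show "recovered E k T xt (Suc n) i = central_recovered k ((\<lambda>j. (xt j, j)) ` V) (Suc n)"
      using topk_state_eq_topk_reach_within[OF assms(1-3) Suc.IH \<open>i \<in> V\<close>] Suc.IH reach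
      by simp
  qed
qed simp

lemma le_nat_ceiling_divide_mult: "0 < k \<Longrightarrow> m \<le> nat \<lceil>real m / real k\<rceil> * k"
proof -
  assume "0 < k"
  have "real m / real k \<le> real (nat \<lceil>real m / real k\<rceil>)" by (rule real_nat_ceiling_ge)
  then have "real m \<le> real (nat \<lceil>real m / real k\<rceil>) * real k"
    using \<open>0 < k\<close> by (metis pos_divide_le_eq of_nat_0_less_iff)
  then show ?thesis by (metis of_nat_le_iff of_nat_mult)
qed

lemma recovered_eq_all_pairs:
  assumes "E \<subseteq> V \<times> V" and "finite V" and "0 < k"
    and "\<forall>i\<in>V. reach_within E T i = V" and "card V \<le> n * k" and "i \<in> V"
  shows "recovered E k T xt n i = (\<lambda>j. (xt j, j)) ` V"
proof -
  have "card ((\<lambda>j. (xt j, j)) ` V) \<le> n * k"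
    using assms(5) card_image_le[OF assms(2)] le_trans by blast
  then show ?thesis
    using recovered_eq_central_recovered[OF assms(1-4)] central_recovered_eq_self assms(2,6)
    by simp
qed

lemma rmod_eq_plus_multiple: "\<exists>z. rmod y c = y + c * of_int z"
  unfolding rmod_def by (intro exI[of _ "- \<lfloor>y / c\<rfloor>"]) simp

lemma rmod_unique:
  assumes "0 \<le> s" and "s < c" and "y = s + c * of_int z"
  shows "rmod y c = s"
proof -
  have "c > 0" using assms by linarith
  then have "y / c = s / c + of_int z" using assms(3) by (simp add: field_simps)
  moreover have "0 \<le> s / c" "s / c < 1" using assms \<open>c > 0\<close> by auto
  ultimately have "\<lfloor>y / c\<rfloor> = z" by (simp add: floor_eq_iff)
  then show ?thesis unfolding rmod_def using assms(3) by simp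
qed

lemma sum_in_nbrs_out_nbrs_eq:
  fixes r :: "nat \<Rightarrow> nat \<Rightarrow> 'a::comm_monoid_add"
  assumes "E \<subseteq> V \<times> V" and "finite V"
  shows "(\<Sum>i\<in>V. \<Sum>j\<in>in_nbrs E i. r j i) = (\<Sum>i\<in>V. \<Sum>j\<in>out_nbrs E i. r i j)"
proof -
  have in_nbrs: "in_nbrs E i = {j\<in>V. (j, i) \<in> E}"
    and out_nbrs: "out_nbrs E i = {j\<in>V. (i, j) \<in> E}" for i
    using assms(1) unfolding in_nbrs_def out_nbrs_def by auto
  have "(\<Sum>i\<in>V. \<Sum>j\<in>in_nbrs E i. r j i) = (\<Sum>i\<in>V. \<Sum>j\<in>V. if (j, i) \<in> E then r j i else 0)"
    unfolding in_nbrs using assms(2) by (simp add: sum.inter_filter)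
  also have "\<dots> = (\<Sum>j\<in>V. \<Sum>i\<in>V. if (j, i) \<in> E then r j i else 0)"
    by (rule sum.swap)
  also have "\<dots> = (\<Sum>i\<in>V. \<Sum>j\<in>out_nbrs E i. r i j)"
    unfolding out_nbrs using assms(2) by (simp add: sum.inter_filter)
  finally show ?thesis .
qed

lemma sum_perturbed_eq_plus_multiple:
  assumes "E \<subseteq> V \<times> V" and "finite V"
  shows "\<exists>z. (\<Sum>i\<in>V. perturbed m a E r x i) = (\<Sum>i\<in>V. x i) + real m * a * of_int z"
proof -
  define c where "c = real m * a"
  define D where "D i = (\<Sum>j\<in>in_nbrs E i. r j i) - (\<Sum>j\<in>out_nbrs E i. r i j)" for i
  have "\<exists>z. perturbed m a E r x i = x i + D i + c * of_int z" for i
  proof -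
    obtain z1 where "rmod (D i) c = D i + c * of_int z1"
      using rmod_eq_plus_multiple by blast
    moreover obtain z2 where "rmod (x i + rmod (D i) c) c = x i + rmod (D i) c + c * of_int z2"
      using rmod_eq_plus_multiple by blast
    ultimately have "perturbed m a E r x i = x i + D i + c * of_int (z1 + z2)"
      unfolding perturbed_def D_def c_def by (simp add: algebra_simps)
    then show ?thesis by blast
  qed
  then obtain z where z: "\<And>i. perturbed m a E r x i = x i + D i + c * of_int (z i)" by metis
  have "(\<Sum>i\<in>V. D i) = 0"
    unfolding D_def sum_subtractf using sum_in_nbrs_out_nbrs_eq[OF assms] by simp
  then have "(\<Sum>i\<in>V. perturbed m a E r x i) = (\<Sum>i\<in>V. x i) + c * of_int (\<Sum>i\<in>V. z i)"
    by (simp add: z sum.distrib sum_distrib_left)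
  then show ?thesis unfolding c_def by blast
qed

theorem theorem2:
  fixes m k T :: nat and a :: real and E :: "(nat \<times> nat) set"
    and x :: "nat \<Rightarrow> real" and r :: "nat \<Rightarrow> nat \<Rightarrow> real"
  assumes "E \<subseteq> {1..m} \<times> {1..m}"
    and "strongly_connected {1..m} E"
    and "a > 0"
    and "\<forall>i\<in>{1..m}. 0 \<le> x i \<and> x i < a"
    and "\<forall>(i, j)\<in>E. 0 \<le> r i j \<and> r i j < real m * a"
    and "0 < k" and "k \<le> m"
    and "diameter {1..m} E \<le> T"
  shows "\<forall>i\<in>{1..m}. titan_output m a E k T r x i = (\<Sum>j\<in>{1..m}. x j) / real m"
proof
  (* The bounds on r matter only for privacy: correctness holds for arbitrary r. *)
  fix i assume "i \<in> {1..m}"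
  define xt where "xt = perturbed m a E r x"
  have "\<forall>i\<in>{1..m}. reach_within E T i = {1..m}"
    using reach_within_eq_if_diameter_le[OF assms(1,2) _ assms(8)] by simp
  then have "recovered E k T xt (nat \<lceil>real m / real k\<rceil>) i = (\<lambda>j. (xt j, j)) ` {1..m}"
    using recovered_eq_all_pairs[OF assms(1) _ assms(6)] le_nat_ceiling_divide_mult[OF assms(6)]
      \<open>i \<in> {1..m}\<close> by simp
  then have recovered_sum:
    "(\<Sum>p\<in>recovered E k T xt (nat \<lceil>real m / real k\<rceil>) i. fst p) = (\<Sum>j\<in>{1..m}. xt j)"
    by (simp add: sum.reindex inj_on_def)
  obtain z where "(\<Sum>j\<in>{1..m}. xt j) = (\<Sum>j\<in>{1..m}. x j) + real m * a * of_int z"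
    using sum_perturbed_eq_plus_multiple[OF assms(1)] unfolding xt_def by blast
  moreover have "0 \<le> (\<Sum>j\<in>{1..m}. x j)" "(\<Sum>j\<in>{1..m}. x j) < real m * a"
    using assms(4) sum_strict_mono[of "{1..m}" x "\<lambda>_. a"] assms(6,7)
    by (auto intro: sum_nonneg)
  ultimately have "rmod (\<Sum>j\<in>{1..m}. xt j) (real m * a) = (\<Sum>j\<in>{1..m}. x j)"
    by (intro rmod_unique) auto
  then show "titan_output m a E k T r x i = (\<Sum>j\<in>{1..m}. x j) / real m"
    unfolding titan_output_def xt_def[symmetric] recovered_sum by simp
qed

end
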